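(* Let $N\ge 1$, $1< p<\infty$ and $0<s<1$ be such that $s\,p>N$. Let $\mu$ be a compactly supported finite (signed) Radon measure on $\mathbb{R}^N$ with support $K$, and let $U\in \mathcal{W}^{s,p}(\mathbb{R}^N)$ satisfy \[ \iint_{\mathbb{R}^N\times\mathbb{R}^N} \frac{J_p(U(x)-U(y))\,(\varphi(x)-\varphi(y))}{|x-y|^{N+s\,p}}\,dx\,dy=\int_{\mathbb{R}^N}\varphi\,d\mu,\quad \mbox{ for every } \varphi\in \mathcal{W}^{s,p}(\mathbb{R}^N). \] Then $U \in L^\infty(\mathbb{R}^N)$ and for every $z\in\mathbb{R}^N$, \[ \|U-U(z)\|_{L^\infty(\mathbb{R}^N)}=\max_{K} |U-U(z)|. \]
   Context: $J_p(t)=|t|^{p-2}t$. $[\varphi]_{W^{s,p}(\mathbb{R}^N)}=\left(\iint_{\mathbb{R}^N\times\mathbb{R}^N}\frac{|\varphi(x)-\varphi(y)|^p}{|x-y|^{N+s\,p}}dx\,dy\right)^{1/p}$; $[\varphi]_{C^{0,\alpha}(\mathbb{R}^N)}=\sup_{x\ne y}\frac{|\varphi(x)-\varphi(y)|}{|x-y|^\alpha}$; $\alpha_{s,p}=s-N/p$. $\mathcal{W}^{s,p}(\mathbb{R}^N)$ is the set of continuous functions with finite $[\cdot]_{C^{0,\alpha_{s,p}}(\mathbb{R}^N)}$ and finite $[\cdot]_{W^{s,p}(\mathbb{R}^N)}$. *)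

theory Defs
  imports "HOL-Analysis.Analysis" "HOL-Probability.Essential_Supremum"
begin

definition Jp :: "real \<Rightarrow> real \<Rightarrow> real" where
  "Jp p t = \<bar>t\<bar> powr (p - 2) * t"

definition alpha_sp :: "real \<Rightarrow> real \<Rightarrow> nat \<Rightarrow> real" where
  "alpha_sp s p N = s - real N / p"

definition gagliardo_p :: "real \<Rightarrow> real \<Rightarrow> ('a::euclidean_space \<Rightarrow> real) \<Rightarrow> ennreal" where
  "gagliardo_p s p \<phi> =
     (\<integral>\<^sup>+ xy. ennreal (\<bar>\<phi> (fst xy) - \<phi> (snd xy)\<bar> powr p /
                      dist (fst xy) (snd xy) powr (real DIM('a) + s * p)) \<partial>(lborel :: ('a \<times> 'a) measure))"

definition holder_finite :: "real \<Rightarrow> ('a::metric_space \<Rightarrow> real) \<Rightarrow> bool" where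
  "holder_finite \<alpha> \<phi> \<longleftrightarrow> (\<exists>C. \<forall>x y. x \<noteq> y \<longrightarrow> \<bar>\<phi> x - \<phi> y\<bar> / dist x y powr \<alpha> \<le> C)"

definition Wsp :: "real \<Rightarrow> real \<Rightarrow> ('a::euclidean_space \<Rightarrow> real) set" where
  "Wsp s p = {\<phi>. continuous_on UNIV \<phi> \<and> holder_finite (alpha_sp s p DIM('a)) \<phi>
                  \<and> gagliardo_p s p \<phi> < \<infinity>}"

text \<open>Support of the signed measure M1 - M2 (i.e. support of its total variation,
  when M1, M2 are the mutually singular Jordan parts).\<close>
definition signed_support :: "'a::metric_space measure \<Rightarrow> 'a measure \<Rightarrow> 'a set" where
  "signed_support M1 M2 = {x. \<forall>e>0. emeasure M1 (ball x e) + emeasure M2 (ball x e) \<noteq> 0}"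

end

theory Submission
  imports Defs
begin

text \<open>Test the equation with \<open>\<phi> = \<psi> \<circ> U\<close>, where \<open>\<psi>\<close> is a monotone 1-Lipschitz truncation
  vanishing on \<open>U(K)\<close>. The right-hand side vanishes because \<open>\<mu>\<close> lives on \<open>K\<close>, while the
  left-hand side dominates the Gagliardo energy of \<open>\<phi>\<close>, since \<open>J\<^sub>p(U(x) - U(y))\<close> and
  \<open>\<phi>(x) - \<phi>(y)\<close> have the same sign and \<open>|\<phi>(x) - \<phi>(y)| \<le> |U(x) - U(y)|\<close>. So \<open>\<phi>\<close> is constant,
  hence zero. Taking \<open>\<psi>(t) = (t - max\<^sub>K U)\<^sup>+\<close> and \<open>\<psi>(t) = -(t - min\<^sub>K U)\<^sup>-\<close> gives
  \<open>min\<^sub>K U \<le> U \<le> max\<^sub>K U\<close> on all of \<open>\<real>\<^sup>N\<close>. Therefore \<open>|U - U(z)|\<close> attains its supremum over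
  \<open>\<real>\<^sup>N\<close> on \<open>K\<close>, and for a continuous function that supremum is the essential supremum.\<close>

definition frac_p_form ::
    "real \<Rightarrow> real \<Rightarrow> ('a::euclidean_space \<Rightarrow> real) \<Rightarrow> ('a \<Rightarrow> real) \<Rightarrow> real" where
  "frac_p_form s p U \<phi> =
     (\<integral>xy. Jp p (U (fst xy) - U (snd xy)) * (\<phi> (fst xy) - \<phi> (snd xy)) /
            dist (fst xy) (snd xy) powr (real DIM('a) + s * p) \<partial>(lborel :: ('a \<times> 'a) measure))"

definition frac_p_laplace_weak_solution ::
    "real \<Rightarrow> real \<Rightarrow> ('a::euclidean_space \<Rightarrow> real) \<Rightarrow> 'a measure \<Rightarrow> 'a measure \<Rightarrow> bool" where
  "frac_p_laplace_weak_solution s p U M1 M2 \<longleftrightarrow>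
     U \<in> Wsp s p \<and>
     (\<forall>\<phi>\<in>Wsp s p. frac_p_form s p U \<phi> = (\<integral>x. \<phi> x \<partial>M1) - (\<integral>x. \<phi> x \<partial>M2))"

lemma Jp_mult_bounds:
  fixes p t u :: real
  assumes p: "1 \<le> p" and same_sign: "0 \<le> t * u" and le: "\<bar>t\<bar> \<le> \<bar>u\<bar>"
  shows "\<bar>t\<bar> powr p \<le> Jp p u * t" and "Jp p u * t \<le> \<bar>u\<bar> powr p"
proof -
  have pow_succ: "x powr (q - 1) * x = x powr q" if "0 \<le> x" for x q :: real
    using powr_mult_base[OF that, of "q - 1"] by (simp add: mult.commute)
  have "u * t = \<bar>u\<bar> * \<bar>t\<bar>"
    using same_sign by (metis abs_mult abs_of_nonneg mult.commute)
  then have J: "Jp p u * t = \<bar>u\<bar> powr (p - 1) * \<bar>t\<bar>"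
    using pow_succ[of "\<bar>u\<bar>" "p - 1"] by (simp add: Jp_def mult.assoc)
  have "\<bar>t\<bar> powr p = \<bar>t\<bar> powr (p - 1) * \<bar>t\<bar>"
    using pow_succ by simp
  also have "\<dots> \<le> \<bar>u\<bar> powr (p - 1) * \<bar>t\<bar>"
    using p le by (intro mult_right_mono powr_mono2) auto
  finally show "\<bar>t\<bar> powr p \<le> Jp p u * t"
    using J by simp
  have "\<bar>u\<bar> powr (p - 1) * \<bar>t\<bar> \<le> \<bar>u\<bar> powr (p - 1) * \<bar>u\<bar>"
    using le by (intro mult_left_mono) auto
  then show "Jp p u * t \<le> \<bar>u\<bar> powr p"
    using J pow_succ[of "\<bar>u\<bar>" p] by simp
qed

lemma mono_diff_mult_nonneg:
  fixes \<psi> :: "real \<Rightarrow> real"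
  assumes "mono \<psi>"
  shows "0 \<le> (\<psi> a - \<psi> b) * (a - b)"
  using monoD[OF assms, of a b] monoD[OF assms, of b a]
  by (cases "a \<le> b") (auto intro: mult_nonpos_nonpos)

lemma Wsp_compose_lipschitz:
  fixes U :: "'a::euclidean_space \<Rightarrow> real"
  assumes p: "0 \<le> p" and U: "U \<in> Wsp s p"
    and lip: "\<And>a b. \<bar>\<psi> a - \<psi> b\<bar> \<le> \<bar>a - b\<bar>"
  shows "(\<lambda>x. \<psi> (U x)) \<in> Wsp s p"
proof -
  from U have Ucont: "continuous_on UNIV U"
    and Uhol: "holder_finite (alpha_sp s p DIM('a)) U" and Ugag: "gagliardo_p s p U < \<infinity>"
    by (auto simp: Wsp_def)
  have "continuous_on UNIV \<psi>"
    by (rule lipschitz_on_continuous_on[of 1])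
      (auto intro!: lipschitz_onI simp: dist_real_def lip)
  then have "continuous_on UNIV (\<lambda>x. \<psi> (U x))"
    by (rule continuous_on_compose2[OF _ Ucont]) auto
  moreover from Uhol obtain C where C: "\<forall>x y. x \<noteq> y \<longrightarrow>
      \<bar>U x - U y\<bar> / dist x y powr alpha_sp s p DIM('a) \<le> C"
    by (auto simp: holder_finite_def)
  then have "holder_finite (alpha_sp s p DIM('a)) (\<lambda>x. \<psi> (U x))"
    unfolding holder_finite_def
    by (intro exI[of _ C]) (meson lip divide_right_mono order_trans powr_ge_zero)
  moreover have "gagliardo_p s p (\<lambda>x. \<psi> (U x)) \<le> gagliardo_p s p U"
    unfolding gagliardo_p_def
    by (intro nn_integral_mono ennreal_leI divide_right_mono powr_mono2) (use p lip in auto)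
  ultimately show ?thesis
    using Ugag by (auto simp: Wsp_def)
qed

lemma signed_support_commute: "signed_support M2 M1 = signed_support M1 M2"
  by (simp add: signed_support_def add.commute)

lemma AE_in_signed_support:
  fixes M1 M2 :: "'a::{metric_space, second_countable_topology} measure"
  assumes sets: "sets M1 = sets borel"
  shows "AE x in M1. x \<in> signed_support M1 M2"
proof -
  define \<F> where "\<F> = {ball x e | x e. 0 < e \<and> emeasure M1 (ball x e) = 0}"
  have outside: "UNIV - signed_support M1 M2 \<subseteq> \<Union>\<F>"
  proof
    fix x assume "x \<in> UNIV - signed_support M1 M2"
    then obtain e where "0 < e" "emeasure M1 (ball x e) + emeasure M2 (ball x e) = 0"
      by (auto simp: signed_support_def)
    then show "x \<in> \<Union>\<F>"
      unfolding \<F>_def by force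
  qed
  obtain \<F>' where \<F>': "\<F>' \<subseteq> \<F>" "countable \<F>'" "\<Union>\<F>' = \<Union>\<F>"
    using Lindelof[of \<F>] unfolding \<F>_def by auto
  have "(\<Union>S\<in>\<F>'. S) \<in> null_sets M1"
  proof (rule null_sets_UN'[OF \<F>'(2)])
    fix S assume "S \<in> \<F>'"
    then obtain x e where "S = ball x e" "emeasure M1 (ball x e) = 0"
      using \<F>'(1) unfolding \<F>_def by auto
    then show "S \<in> null_sets M1"
      using sets by (auto intro: null_setsI)
  qed
  then show ?thesis
    by (rule AE_I') (use outside \<F>' in auto)
qed

lemma emeasure_lborel_ball_pos:
  fixes c :: "'a::euclidean_space"
  assumes "0 < r"
  shows "0 < emeasure lborel (ball c r)"
  using content_ball_pos[OF assms, of c] by (auto simp: measure_def zero_less_iff_neq_zero)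

lemma emeasure_lborel_ball_times_ball_pos:
  fixes a b :: "'a::euclidean_space"
  assumes "0 < r" and "0 < r'"
  shows "0 < emeasure (lborel :: ('a \<times> 'a) measure) (ball a r \<times> ball b r')"
proof -
  have "emeasure (lborel :: ('a \<times> 'a) measure) (ball a r \<times> ball b r') =
        emeasure lborel (ball a r) * emeasure lborel (ball b r')"
    using lborel.emeasure_pair_measure_Times[of "ball a r" lborel "ball b r'"]
    by (simp add: lborel_prod)
  then show ?thesis
    using assms by (simp add: emeasure_lborel_ball_pos ennreal_zero_less_mult_iff)
qed

lemma gagliardo_p_eq_0_imp_constant:
  fixes \<phi> :: "'a::euclidean_space \<Rightarrow> real"
  assumes p: "0 \<le> p" and s: "0 \<le> s" and cont: "continuous_on UNIV \<phi>"
    and zero: "gagliardo_p s p \<phi> = 0"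
  shows "\<phi> a = \<phi> b"
proof (rule ccontr)
  assume "\<phi> a \<noteq> \<phi> b"
  define c where "c = \<bar>\<phi> a - \<phi> b\<bar> / 3"
  have c: "0 < c"
    using \<open>\<phi> a \<noteq> \<phi> b\<close> by (simp add: c_def)
  obtain ra where ra: "0 < ra" "\<And>y. dist y a < ra \<Longrightarrow> dist (\<phi> y) (\<phi> a) < c"
    using cont c unfolding continuous_on_iff by blast
  obtain rb where rb: "0 < rb" "\<And>y. dist y b < rb \<Longrightarrow> dist (\<phi> y) (\<phi> b) < c"
    using cont c unfolding continuous_on_iff by blast
  define r where "r = min 1 (min ra rb)"
  define q where "q = real DIM('a) + s * p"
  define R where "R = dist a b + 2"
  define c' where "c' = c powr p / R powr q"
  have "0 < R"
    by (simp add: R_def add_nonneg_pos)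
  then have "0 < c'"
    using c by (simp add: c'_def)
  have lower_bound: "c' \<le> \<bar>\<phi> x - \<phi> y\<bar> powr p / dist x y powr q"
    if "x \<in> ball a r" "y \<in> ball b r" for x y
  proof -
    have "dist x a < 1" "dist x a < ra" "dist y b < 1" "dist y b < rb"
      using that by (auto simp: r_def dist_commute)
    then have "\<bar>\<phi> x - \<phi> a\<bar> < c" "\<bar>\<phi> y - \<phi> b\<bar> < c"
      using ra(2) rb(2) by (auto simp: dist_real_def)
    then have far: "c \<le> \<bar>\<phi> x - \<phi> y\<bar>"
      unfolding c_def by argo
    have "dist x y \<le> R"
      using dist_triangle[of x y a] dist_triangle[of a y b] \<open>dist x a < 1\<close> \<open>dist y b < 1\<close>
      unfolding R_def by (simp add: dist_commute)
    moreover have "0 < dist x y"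
      using far c by auto
    ultimately show ?thesis
      unfolding c'_def using far c p s by (intro frac_le powr_mono2) (auto simp: q_def)
  qed
  have "ennreal c' * emeasure lborel (ball a r \<times> ball b r) =
        (\<integral>\<^sup>+xy. ennreal c' * indicator (ball a r \<times> ball b r) xy \<partial>lborel)"
    by (rule nn_integral_cmult_indicator[symmetric]) (simp add: open_Times)
  also have "\<dots> \<le> gagliardo_p s p \<phi>"
    unfolding gagliardo_p_def
    by (intro nn_integral_mono)
      (auto simp: indicator_def intro!: ennreal_leI lower_bound[unfolded q_def])
  finally show False
    using zero \<open>0 < c'\<close> emeasure_lborel_ball_times_ball_pos[of r r a b] ra rb
    by (simp add: r_def ennreal_zero_less_mult_iff)
qed

lemma gagliardo_p_le_frac_p_form:
  fixes U :: "'a::euclidean_space \<Rightarrow> real"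
  assumes p: "1 \<le> p" and U: "U \<in> Wsp s p" and mono: "mono \<psi>"
    and lip: "\<And>a b. \<bar>\<psi> a - \<psi> b\<bar> \<le> \<bar>a - b\<bar>"
  shows "gagliardo_p s p (\<lambda>x. \<psi> (U x)) \<le> ennreal (frac_p_form s p U (\<lambda>x. \<psi> (U x)))"
proof -
  define \<phi> where "\<phi> = (\<lambda>x. \<psi> (U x))"
  define D where "D = (\<lambda>xy::'a \<times> 'a. dist (fst xy) (snd xy) powr (real DIM('a) + s * p))"
  define f where "f = (\<lambda>xy. Jp p (U (fst xy) - U (snd xy)) * (\<phi> (fst xy) - \<phi> (snd xy)) / D xy)"
  define g where "g = (\<lambda>xy. \<bar>\<phi> (fst xy) - \<phi> (snd xy)\<bar> powr p / D xy)"
  define h where "h = (\<lambda>xy. \<bar>U (fst xy) - U (snd xy)\<bar> powr p / D xy)"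
  have bounds: "g xy \<le> f xy \<and> f xy \<le> h xy" for xy
  proof -
    let ?t = "\<phi> (fst xy) - \<phi> (snd xy)" and ?u = "U (fst xy) - U (snd xy)"
    have "0 \<le> ?t * ?u" "\<bar>?t\<bar> \<le> \<bar>?u\<bar>"
      unfolding \<phi>_def by (simp_all only: mono_diff_mult_nonneg[OF mono] lip)
    from Jp_mult_bounds[OF p this] show ?thesis
      unfolding f_def g_def h_def by (simp add: divide_right_mono D_def)
  qed
  have g_nonneg: "0 \<le> g xy" for xy
    by (simp add: g_def D_def)
  have f_nonneg: "0 \<le> f xy" for xy
    using bounds[of xy] g_nonneg[of xy] by linarith
  have "\<phi> \<in> Wsp s p"
    unfolding \<phi>_def using p by (intro Wsp_compose_lipschitz[OF _ U lip]) auto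
  then have [measurable]: "\<phi> \<in> borel_measurable borel" "U \<in> borel_measurable borel"
    using U by (auto simp: Wsp_def intro: borel_measurable_continuous_onI)
  have f_meas: "f \<in> borel_measurable lborel"
    unfolding f_def D_def Jp_def lborel_prod[symmetric] by measurable
  have h_meas: "h \<in> borel_measurable lborel"
    unfolding h_def D_def lborel_prod[symmetric] by measurable
  have "(\<integral>\<^sup>+xy. ennreal (h xy) \<partial>lborel) < \<infinity>"
    using U unfolding Wsp_def gagliardo_p_def h_def D_def by simp
  then have "integrable lborel h"
    by (intro integrableI_nonneg[OF h_meas] AE_I2) (simp add: h_def D_def)
  then have "integrable lborel f"
    by (rule Bochner_Integration.integrable_bound[OF _ f_meas])
      (use bounds f_nonneg in \<open>auto intro!: AE_I2 intro: order_trans[OF _ abs_ge_self]\<close>)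
  then have "(\<integral>\<^sup>+xy. ennreal (f xy) \<partial>lborel) = ennreal (\<integral>xy. f xy \<partial>lborel)"
    by (rule nn_integral_eq_integral) (simp add: f_nonneg)
  moreover have "gagliardo_p s p \<phi> \<le> (\<integral>\<^sup>+xy. ennreal (f xy) \<partial>lborel)"
    unfolding gagliardo_p_def using bounds
    by (intro nn_integral_mono ennreal_leI) (simp add: g_def D_def)
  ultimately show ?thesis
    by (simp add: \<phi>_def f_def D_def frac_p_form_def)
qed

lemma frac_p_laplace_truncation_vanishes:
  fixes U :: "'a::euclidean_space \<Rightarrow> real"
  assumes p: "1 \<le> p" and s: "0 \<le> s"
    and sol: "frac_p_laplace_weak_solution s p U M1 M2"
    and M1: "AE x in M1. x \<in> K" and M2: "AE x in M2. x \<in> K" and "k \<in> K"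
    and mono: "mono \<psi>" and lip: "\<And>a b. \<bar>\<psi> a - \<psi> b\<bar> \<le> \<bar>a - b\<bar>"
    and zero_on_K: "\<And>y. y \<in> K \<Longrightarrow> \<psi> (U y) = 0"
  shows "\<psi> (U x) = 0"
proof -
  from sol have U: "U \<in> Wsp s p"
    and weak_eq: "\<And>\<phi>. \<phi> \<in> Wsp s p \<Longrightarrow>
      frac_p_form s p U \<phi> = (\<integral>x. \<phi> x \<partial>M1) - (\<integral>x. \<phi> x \<partial>M2)"
    by (auto simp: frac_p_laplace_weak_solution_def)
  have \<phi>: "(\<lambda>x. \<psi> (U x)) \<in> Wsp s p"
    using p by (intro Wsp_compose_lipschitz[OF _ U lip]) auto
  have "(\<integral>x. \<psi> (U x) \<partial>M1) = 0" "(\<integral>x. \<psi> (U x) \<partial>M2) = 0"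
    by (rule integral_eq_zero_AE; use M1 M2 zero_on_K in auto)+
  then have "frac_p_form s p U (\<lambda>x. \<psi> (U x)) = 0"
    using weak_eq[OF \<phi>] by simp
  then have "gagliardo_p s p (\<lambda>x. \<psi> (U x)) = 0"
    using gagliardo_p_le_frac_p_form[OF p U mono lip] by simp
  then have "\<psi> (U x) = \<psi> (U k)"
    using p s \<phi> by (intro gagliardo_p_eq_0_imp_constant) (auto simp: Wsp_def)
  then show ?thesis
    using zero_on_K[OF \<open>k \<in> K\<close>] by simp
qed

lemma frac_p_laplace_le_max_on_support:
  fixes U :: "'a::euclidean_space \<Rightarrow> real"
  assumes "1 \<le> p" and "0 \<le> s" and "frac_p_laplace_weak_solution s p U M1 M2"
    and "AE x in M1. x \<in> K" and "AE x in M2. x \<in> K"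
    and "k \<in> K" and "\<And>y. y \<in> K \<Longrightarrow> U y \<le> U k"
  shows "U x \<le> U k"
proof -
  have "max (U x - U k) 0 = 0"
  proof (rule frac_p_laplace_truncation_vanishes[OF assms(1-6), where \<psi> = "\<lambda>t. max (t - U k) 0"])
    show "mono (\<lambda>t. max (t - U k) 0)"
      by (rule monoI) simp
    show "\<bar>max (a - U k) 0 - max (b - U k) 0\<bar> \<le> \<bar>a - b\<bar>" for a b
      by (simp add: max_def abs_if)
    show "max (U y - U k) 0 = 0" if "y \<in> K" for y
      using assms(7)[OF that] by simp
  qed
  then show ?thesis
    by simp
qed

lemma frac_p_laplace_ge_min_on_support:
  fixes U :: "'a::euclidean_space \<Rightarrow> real"
  assumes "1 \<le> p" and "0 \<le> s" and "frac_p_laplace_weak_solution s p U M1 M2"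
    and "AE x in M1. x \<in> K" and "AE x in M2. x \<in> K"
    and "k \<in> K" and "\<And>y. y \<in> K \<Longrightarrow> U k \<le> U y"
  shows "U k \<le> U x"
proof -
  have "min (U x - U k) 0 = 0"
  proof (rule frac_p_laplace_truncation_vanishes[OF assms(1-6), where \<psi> = "\<lambda>t. min (t - U k) 0"])
    show "mono (\<lambda>t. min (t - U k) 0)"
      by (rule monoI) simp
    show "\<bar>min (a - U k) 0 - min (b - U k) 0\<bar> \<le> \<bar>a - b\<bar>" for a b
      by (simp add: min_def abs_if)
    show "min (U y - U k) 0 = 0" if "y \<in> K" for y
      using assms(7)[OF that] by simp
  qed
  then show ?thesis
    by simp
qed

lemma frac_p_laplace_bounded_by_support:
  fixes U :: "'a::euclidean_space \<Rightarrow> real"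
  assumes "1 \<le> p" and "0 \<le> s" and sol: "frac_p_laplace_weak_solution s p U M1 M2"
    and "AE x in M1. x \<in> K" and "AE x in M2. x \<in> K" and "compact K" and "K \<noteq> {}"
  obtains kmin kmax where "kmin \<in> K" "kmax \<in> K" "\<And>x. U kmin \<le> U x" "\<And>x. U x \<le> U kmax"
proof -
  have "continuous_on K U"
    using sol by (auto simp: frac_p_laplace_weak_solution_def Wsp_def intro: continuous_on_subset)
  obtain kmin where kmin: "kmin \<in> K" "\<And>y. y \<in> K \<Longrightarrow> U kmin \<le> U y"
    using continuous_attains_inf[OF \<open>compact K\<close> \<open>K \<noteq> {}\<close> \<open>continuous_on K U\<close>] by blast
  obtain kmax where kmax: "kmax \<in> K" "\<And>y. y \<in> K \<Longrightarrow> U y \<le> U kmax"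
    using continuous_attains_sup[OF \<open>compact K\<close> \<open>K \<noteq> {}\<close> \<open>continuous_on K U\<close>] by blast
  show ?thesis
    using that[OF kmin(1) kmax(1)] frac_p_laplace_ge_min_on_support[OF assms(1-5) kmin]
      frac_p_laplace_le_max_on_support[OF assms(1-5) kmax] by blast
qed

lemma esssup_lborel_continuous_eq_max:
  fixes f :: "'a::euclidean_space \<Rightarrow> real"
  assumes cont: "continuous_on UNIV f" and max: "\<And>x. f x \<le> f x0"
  shows "esssup lborel (\<lambda>x. ereal (f x)) = ereal (f x0)"
proof (rule antisym)
  have [measurable]: "f \<in> borel_measurable borel"
    by (rule borel_measurable_continuous_onI[OF cont])
  show "esssup lborel (\<lambda>x. ereal (f x)) \<le> ereal (f x0)"
    by (rule esssup_I) (auto simp: max)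
  show "ereal (f x0) \<le> esssup lborel (\<lambda>x. ereal (f x))"
  proof (rule ccontr)
    assume "\<not> ereal (f x0) \<le> esssup lborel (\<lambda>x. ereal (f x))"
    then have "esssup lborel (\<lambda>x. ereal (f x)) < ereal (f x0)"
      by simp
    then obtain c where c: "esssup lborel (\<lambda>x. ereal (f x)) < ereal c" "ereal c < ereal (f x0)"
      using ereal_dense2 by blast
    then have "0 < f x0 - c"
      by simp
    then obtain r where r: "0 < r" "\<And>y. dist y x0 < r \<Longrightarrow> dist (f y) (f x0) < f x0 - c"
      using cont unfolding continuous_on_iff by blast
    have "AE x in lborel. x \<notin> ball x0 r"
      using esssup_AE[of "\<lambda>x. ereal (f x)" lborel]
    proof eventually_elim
      case (elim x)
      show ?case
      proof
        assume "x \<in> ball x0 r"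
        then have "c < f x"
          using r(2)[of x] by (auto simp: dist_real_def dist_commute)
        then show False
          using le_less_trans[OF elim c(1)] by simp
      qed
    qed
    then have "ball x0 r \<in> null_sets lborel"
      by (subst AE_iff_null_sets) auto
    then show False
      using emeasure_lborel_ball_pos[OF r(1), of x0] by auto
  qed
qed

lemma abs_diff_dominated_by_extremes:
  fixes u :: "'a \<Rightarrow> real"
  assumes "u a \<le> t" and "t \<le> u b"
  shows "\<exists>k\<in>{a, b}. \<bar>t - c\<bar> \<le> \<bar>u k - c\<bar>"
  using assms by (cases "c \<le> t") auto

lemma esssup_lborel_continuous_attained_on:
  fixes f :: "'a::euclidean_space \<Rightarrow> real"
  assumes cont: "continuous_on UNIV f" and "compact K" and "K \<noteq> {}"
    and dominated: "\<And>x. \<exists>k\<in>K. f x \<le> f k"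
  obtains x0 where "x0 \<in> K" "\<And>x. x \<in> K \<Longrightarrow> f x \<le> f x0"
    "esssup lborel (\<lambda>x. ereal (f x)) = ereal (f x0)"
proof -
  obtain x0 where x0: "x0 \<in> K" "\<And>x. x \<in> K \<Longrightarrow> f x \<le> f x0"
    using continuous_attains_sup[OF \<open>compact K\<close> \<open>K \<noteq> {}\<close> continuous_on_subset[OF cont]]
    by blast
  have "f x \<le> f x0" for x
    using dominated[of x] x0(2) by force
  then show ?thesis
    using that x0 esssup_lborel_continuous_eq_max[OF cont] by blast
qed

theorem proposition7p6:
  fixes s p :: real and U :: "'a::euclidean_space \<Rightarrow> real"
    and M1 M2 :: "'a measure" and K :: "'a set"
  assumes "1 < p" and "0 < s" and "s < 1" and "s * p > real DIM('a)"
    and "sets M1 = sets borel" and "sets M2 = sets borel"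
    and "finite_measure M1" and "finite_measure M2"
    and "\<exists>P\<in>sets borel. emeasure M1 (UNIV - P) = 0 \<and> emeasure M2 P = 0"
    and "K = signed_support M1 M2"
    and "compact K" and "K \<noteq> {}"
    and "U \<in> Wsp s p"
    and "\<forall>\<phi>\<in>Wsp s p.
           (\<integral>xy. Jp p (U (fst xy) - U (snd xy)) * (\<phi> (fst xy) - \<phi> (snd xy)) /
                  dist (fst xy) (snd xy) powr (real DIM('a) + s * p) \<partial>(lborel :: ('a \<times> 'a) measure))
           = (\<integral>x. \<phi> x \<partial>M1) - (\<integral>x. \<phi> x \<partial>M2)"
  shows "esssup lborel (\<lambda>x. ereal \<bar>U x\<bar>) < \<infinity> \<and>
         (\<forall>z. \<exists>x0\<in>K. (\<forall>x\<in>K. \<bar>U x - U z\<bar> \<le> \<bar>U x0 - U z\<bar>) \<and>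
              esssup lborel (\<lambda>x. ereal \<bar>U x - U z\<bar>) = ereal \<bar>U x0 - U z\<bar>)"
proof -
  have sol: "frac_p_laplace_weak_solution s p U M1 M2"
    using assms(13,14) by (simp add: frac_p_laplace_weak_solution_def frac_p_form_def)
  have M1: "AE x in M1. x \<in> K" and M2: "AE x in M2. x \<in> K"
    using AE_in_signed_support[OF assms(5), of M2] AE_in_signed_support[OF assms(6), of M1]
    by (simp_all add: assms(10) signed_support_commute)
  have "1 \<le> p" "0 \<le> s"
    using assms(1,2) by simp_all
  then obtain kmin kmax where kmin: "kmin \<in> K" "\<And>x. U kmin \<le> U x"
    and kmax: "kmax \<in> K" "\<And>x. U x \<le> U kmax"
    using frac_p_laplace_bounded_by_support[OF _ _ sol M1 M2 assms(11,12)] by metis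
  have dominated: "\<exists>k\<in>K. \<bar>U x - c\<bar> \<le> \<bar>U k - c\<bar>" for x c
    using abs_diff_dominated_by_extremes[of U kmin "U x" kmax, OF kmin(2) kmax(2)] kmin(1) kmax(1)
    by blast
  have cont: "continuous_on UNIV (\<lambda>x. \<bar>U x - c\<bar>)" for c
    using assms(13) by (intro continuous_intros) (simp add: Wsp_def)
  obtain x1 where "esssup lborel (\<lambda>x. ereal \<bar>U x - 0\<bar>) = ereal \<bar>U x1 - 0\<bar>"
    using esssup_lborel_continuous_attained_on[OF cont assms(11,12) dominated] by blast
  moreover have "\<exists>x0\<in>K. (\<forall>x\<in>K. \<bar>U x - U z\<bar> \<le> \<bar>U x0 - U z\<bar>) \<and>
      esssup lborel (\<lambda>x. ereal \<bar>U x - U z\<bar>) = ereal \<bar>U x0 - U z\<bar>" for z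
    using esssup_lborel_continuous_attained_on[OF cont assms(11,12) dominated] by metis
  ultimately show ?thesis
    by simp
qed

end
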